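(* Let $\mathcal{A}$, $\mathbf{r}$, $V_d$ and $C_{2^m}$ be as below. For every $m\ge3$, $\pi^{-1}(V_{2^m})=V_{2^{m+1}}$, where $\pi:C_{2^{m+1}}\to C_{2^m}$ is reduction modulo $2^m$.
   Context: Let $\mathcal{P}$ be a primitive integral Apollonian 3-circle packing (start with three mutually tangent circles; in each curvilinear triangular gap bounded by three mutually tangent circles inscribe the unique three circles such that the six circles involved are each tangent to four others and disjoint from the remaining one; iterate ad infinitum; integral means all curvatures are integers, primitive means their gcd is 1). Fix mutually tangent circles $C_1,C_2,C_3$ of $\mathcal{P}$ with curvatures $\kappa_1,\kappa_2,\kappa_3$ and the three circles $C_{1'},C_{2'},C_{3'}$ inscribed in one of their gaps, labeled so that $C_{i'}$ is disjoint from $C_i$; then $\kappa_1+\kappa_{1'}=\kappa_2+\kappa_{2'}=\kappa_3+\kappa_{3'}=2w$, and set $\mathbf{r}=(\kappa_1,\kappa_2,\kappa_3,w)^T$. Let $Q(\kappa_1,\kappa_2,\kappa_3,w)=w^2-2w(\kappa_1+\kappa_2+\kappa_3)+\kappa_1^2+\kappa_2^2+\kappa_3^2$. Let $\tilde{\mathcal{A}}\subset GL(4,\mathbb{Z})$ be generated by the eight matrices (rows separated by semicolons) $S_{123}=(1,0,0,0;0,1,0,0;0,0,1,0;2,2,2,-1)$, $S_{1'23}=(-3,4,4,4;0,1,0,0;0,0,1,0;-2,2,2,3)$, $S_{12'3}=(1,0,0,0;4,-3,4,4;0,0,1,0;2,-2,2,3)$, $S_{123'}=(1,0,0,0;0,1,0,0;4,4,-3,4;2,2,-2,3)$,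 $S_{1'2'3}=(-3,-4,4,12;-4,-3,4,12;0,0,1,0;-2,-2,2,7)$, $S_{1'23'}=(-3,4,-4,12;0,1,0,0;-4,4,-3,12;-2,2,-2,7)$, $S_{12'3'}=(1,0,0,0;4,-3,-4,12;4,-4,-3,12;2,-2,-2,7)$, $S_{1'2'3'}=(-3,-4,-4,20;-4,-3,-4,20;-4,-4,-3,20;-2,-2,-2,11)$, and let $\mathcal{A}$ be its index-2 subgroup of products of an even number of these generators. Let $V=\mathcal{A}\cdot\mathbf{r}\subset\mathbb{Z}^4$ and $V_d$ its reduction modulo $d$. For $m\ge1$, $C_{2^m}$ is the set of $\mathbf{v}\in(\mathbb{Z}/2^m\mathbb{Z})^4$ such that some integer lift $\mathbf{w}$ of $\mathbf{v}$ satisfies $Q(\mathbf{w})\equiv0\pmod{2^{m+1}}$. *)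

theory Defs
  imports "HOL-Analysis.Analysis"
begin

text \<open>Vectors in Z^4 are int^4 (components $1,$2,$3,$4 = kappa1,kappa2,kappa3,w);
  4x4 integer matrices are int^4^4 (rows), acting by *v, multiplied by **.\<close>

definition mat4 :: "int list list \<Rightarrow> int^4^4" where
  "mat4 rs = (\<chi> i j. (rs ! (if i = 1 then 0 else if i = 2 then 1 else if i = 3 then 2 else 3))
                          ! (if j = 1 then 0 else if j = 2 then 1 else if j = 3 then 2 else 3))"

definition Qf :: "int^4 \<Rightarrow> int" where
  "Qf v = (v$4)^2 - 2 * (v$4) * (v$1 + v$2 + v$3) + (v$1)^2 + (v$2)^2 + (v$3)^2"

definition S_123 :: "int^4^4" where "S_123 = mat4 [[1,0,0,0],[0,1,0,0],[0,0,1,0],[2,2,2,-1]]"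
definition S_1'23 :: "int^4^4" where "S_1'23 = mat4 [[-3,4,4,4],[0,1,0,0],[0,0,1,0],[-2,2,2,3]]"
definition S_12'3 :: "int^4^4" where "S_12'3 = mat4 [[1,0,0,0],[4,-3,4,4],[0,0,1,0],[2,-2,2,3]]"
definition S_123' :: "int^4^4" where "S_123' = mat4 [[1,0,0,0],[0,1,0,0],[4,4,-3,4],[2,2,-2,3]]"
definition S_1'2'3 :: "int^4^4" where "S_1'2'3 = mat4 [[-3,-4,4,12],[-4,-3,4,12],[0,0,1,0],[-2,-2,2,7]]"
definition S_1'23' :: "int^4^4" where "S_1'23' = mat4 [[-3,4,-4,12],[0,1,0,0],[-4,4,-3,12],[-2,2,-2,7]]"
definition S_12'3' :: "int^4^4" where "S_12'3' = mat4 [[1,0,0,0],[4,-3,-4,12],[4,-4,-3,12],[2,-2,-2,7]]"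
definition S_1'2'3' :: "int^4^4" where "S_1'2'3' = mat4 [[-3,-4,-4,20],[-4,-3,-4,20],[-4,-4,-3,20],[-2,-2,-2,11]]"

definition gens :: "(int^4^4) set" where
  "gens = {S_123, S_1'23, S_12'3, S_123', S_1'2'3, S_1'23', S_12'3', S_1'2'3'}"

text \<open>The group generated by the generators. Each generator is an involution
  (S ** S = mat 1), so the generated group equals the set of finite products.\<close>
inductive_set Atilde :: "(int^4^4) set" where
  one: "mat 1 \<in> Atilde"
| step: "S \<in> gens \<Longrightarrow> M \<in> Atilde \<Longrightarrow> S ** M \<in> Atilde"

inductive_set Aeven :: "(int^4^4) set" where
  one: "mat 1 \<in> Aeven"
| step: "S \<in> gens \<Longrightarrow> T \<in> gens \<Longrightarrow> M \<in> Aeven \<Longrightarrow> S ** T ** M \<in> Aeven"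

text \<open>Curvatures of all circles of the packing generated from r: each configuration
  A r = (k1,k2,k3,w) contributes the six curvatures k_i and k_i' = 2w - k_i.\<close>
definition packing_curvatures :: "int^4 \<Rightarrow> int set" where
  "packing_curvatures r =
     {(M *v r) $ i | M i. M \<in> Atilde \<and> i \<in> {1,2,3}} \<union>
     {2 * (M *v r) $ 4 - (M *v r) $ i | M i. M \<in> Atilde \<and> i \<in> {1,2,3}}"

definition orbitV :: "int^4 \<Rightarrow> (int^4) set" where
  "orbitV r = (\<lambda>M. M *v r) ` Aeven"

text \<open>Reduction modulo d, with (Z/dZ)^4 represented by vectors with entries in [0,d).\<close>
definition red :: "int \<Rightarrow> int^4 \<Rightarrow> int^4" where
  "red d v = (\<chi> i. v $ i mod d)"

definition Vmod :: "int^4 \<Rightarrow> int \<Rightarrow> (int^4) set" where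
  "Vmod r d = red d ` orbitV r"

definition residues4 :: "int \<Rightarrow> (int^4) set" where
  "residues4 d = {v. \<forall>i. 0 \<le> v $ i \<and> v $ i < d}"

definition C2 :: "nat \<Rightarrow> (int^4) set" where
  "C2 m = {v \<in> residues4 (2^m). \<exists>w. red (2^m) w = v \<and> (2::int)^(m+1) dvd Qf w}"

end

theory Submission
  imports Defs
begin

text \<open>Write the Descartes form as \<open>Q(x + c t) = Q x + 2c B(x,t) + c\<^sup>2 Q t\<close> with \<open>B\<close> its polar
  form. A class \<open>w\<close> mod \<open>2\<^sup>m\<^sup>+\<^sup>1\<close> with \<open>Q w \<equiv> 0 (mod 2\<^sup>m\<^sup>+\<^sup>2)\<close> lying over an orbit point
  \<open>x = M r\<close> is \<open>x + 2\<^sup>m t\<close> with \<open>B(x,t)\<close> even (as \<open>m \<ge> 3\<close> and \<open>Q x = 0\<close>). It remains to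
  find \<open>N \<in> \<A>\<close> with \<open>N \<equiv> I + 2\<^sup>m Y (mod 2\<^sup>m\<^sup>+\<^sup>1)\<close> and \<open>Y x \<equiv> t (mod 2)\<close>, for then
  \<open>N M r \<equiv> x + 2\<^sup>m t\<close>. The residues \<open>Y mod 2\<close> of such \<open>N\<close> form an additive group
  (since \<open>(I + 2\<^sup>k A)(I + 2\<^sup>k B) \<equiv> I + 2\<^sup>k (A + B)\<close>) which for \<open>k \<ge> 2\<close> only grows from
  level \<open>k\<close> to \<open>k+1\<close> (by squaring). Six explicit words in the generators lie at level 3,
  and by primitivity \<open>x mod 2\<close> is one of three vectors, for each of which suitable
  combinations of those six hit every admissible \<open>t\<close>.\<close>

lemma Aeven_mult: "A \<in> Aeven \<Longrightarrow> B \<in> Aeven \<Longrightarrow> A ** B \<in> Aeven"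
proof (induction A rule: Aeven.induct)
  case one then show ?case by simp
next
  case (step S T M)
  have "S ** T ** M ** B = S ** T ** (M ** B)" by (simp add: matrix_mul_assoc)
  then show ?case using step by (simp add: Aeven.step)
qed

lemma Atilde_mult: "A \<in> Atilde \<Longrightarrow> B \<in> Atilde \<Longrightarrow> A ** B \<in> Atilde"
proof (induction A rule: Atilde.induct)
  case one then show ?case by simp
next
  case (step S M)
  have "S ** M ** B = S ** (M ** B)" by (simp add: matrix_mul_assoc)
  then show ?case using step by (simp add: Atilde.step)
qed

lemmas gens_defs = S_123_def S_1'23_def S_12'3_def S_123'_def
  S_1'2'3_def S_1'23'_def S_12'3'_def S_1'2'3'_def

lemma gens_involution: "S \<in> gens \<Longrightarrow> S ** S = mat 1"
  unfolding gens_def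
  by (auto simp: gens_defs mat4_def matrix_matrix_mult_def sum_4 vec_eq_iff forall_4 mat_def)

lemma Aeven_left_inverse: "M \<in> Aeven \<Longrightarrow> \<exists>N\<in>Atilde. N ** M = mat 1"
proof (induction M rule: Aeven.induct)
  case one then show ?case by (auto intro: Atilde.one)
next
  case (step S T M)
  then obtain N where N: "N \<in> Atilde" "N ** M = mat 1" by blast
  have "T ** (S ** mat 1) \<in> Atilde" using step by (blast intro: Atilde.step Atilde.one)
  then have "N ** (T ** (S ** mat 1)) \<in> Atilde" using N by (simp add: Atilde_mult)
  moreover have "N ** (T ** (S ** mat 1)) ** (S ** T ** M) = N ** (T ** ((S ** S) ** T) ** M)"
    by (simp add: matrix_mul_assoc)
  then have "N ** (T ** (S ** mat 1)) ** (S ** T ** M) = mat 1"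
    using step N by (simp add: gens_involution)
  ultimately show ?case by blast
qed

lemma Qf_gens_invariant: "S \<in> gens \<Longrightarrow> Qf (S *v v) = Qf v"
  unfolding gens_def
  by (auto simp: gens_defs mat4_def matrix_vector_mult_def sum_4 Qf_def algebra_simps power2_eq_square)

lemma Qf_Aeven_invariant: "M \<in> Aeven \<Longrightarrow> Qf (M *v v) = Qf v"
  by (induction M rule: Aeven.induct) (simp_all add: matrix_vector_mul_assoc[symmetric] Qf_gens_invariant)

definition Qf_polar :: "int^4 \<Rightarrow> int^4 \<Rightarrow> int" where
  "Qf_polar x t = x$4 * t$4 - x$4 * (t$1 + t$2 + t$3) - t$4 * (x$1 + x$2 + x$3)
    + x$1 * t$1 + x$2 * t$2 + x$3 * t$3"

lemma Qf_add_scaled: "Qf (x + c *s t) = Qf x + 2 * c * Qf_polar x t + c^2 * Qf t"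
  unfolding Qf_def Qf_polar_def by (simp add: power2_eq_square algebra_simps)

lemma Qf_polar_add_left: "Qf_polar (x + y) t = Qf_polar x t + Qf_polar y t"
  unfolding Qf_polar_def by (simp add: algebra_simps)

lemma Qf_polar_scale_left: "Qf_polar (c *s x) t = c * Qf_polar x t"
  unfolding Qf_polar_def by (simp add: algebra_simps)

lemma vec_mod2_decomp: "x = (\<chi> i. x$i mod 2) + 2 *s (\<chi> i. x$i div 2)"
  for x :: "int^'n"
  by (simp add: vec_eq_iff)

lemma Qf_mod4_cases:
  fixes a :: "int^4"
  assumes "\<forall>i. a$i = 0 \<or> a$i = 1" "4 dvd Qf a" "\<exists>i. a$i \<noteq> 0"
  shows "(a$1, a$2, a$3, a$4) \<in> {(1,0,0,1), (0,1,0,1), (0,0,1,1)}"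
proof -
  have "a$1 = 0 \<or> a$1 = 1" "a$2 = 0 \<or> a$2 = 1" "a$3 = 0 \<or> a$3 = 1" "a$4 = 0 \<or> a$4 = 1"
    using assms(1) by auto
  moreover have "\<not> (a$1 = 0 \<and> a$2 = 0 \<and> a$3 = 0 \<and> a$4 = 0)"
    using assms(3) exhaust_4 by metis
  ultimately show ?thesis using assms(2) unfolding Qf_def by auto
qed

lemma Aeven_orbit_not_all_even:
  assumes "Gcd (packing_curvatures r) = 1" "M \<in> Aeven"
  shows "\<exists>i. odd ((M *v r)$i)"
proof (rule ccontr)
  assume "\<nexists>i. odd ((M *v r)$i)"
  then have even_Mr: "\<forall>i. 2 dvd (M *v r)$i" by simp
  have even_mult: "2 dvd (N *v y)$i" if "\<forall>j. 2 dvd y$j" for N :: "int^4^4" and y i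
    using that by (simp add: matrix_vector_mult_def dvd_sum)
  obtain N where "N ** M = mat 1" using Aeven_left_inverse[OF assms(2)] by blast
  then have "r = N *v (M *v r)" by (simp add: matrix_vector_mul_assoc)
  then have "\<forall>j. 2 dvd r$j" using even_mult[OF even_Mr] by metis
  then have "\<forall>c\<in>packing_curvatures r. 2 dvd c"
    unfolding packing_curvatures_def using even_mult by auto
  then have "2 dvd Gcd (packing_curvatures r)" by (simp add: Gcd_greatest)
  then show False using assms(1) by simp
qed

lemma Aeven_orbit_mod2:
  assumes "Qf r = 0" "Gcd (packing_curvatures r) = 1" "M \<in> Aeven"
  defines "a \<equiv> \<chi> i. (M *v r)$i mod 2"
  shows "(a$1, a$2, a$3, a$4) \<in> {(1,0,0,1), (0,1,0,1), (0,0,1,1)}"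
proof (rule Qf_mod4_cases)
  show "\<forall>i. a$i = 0 \<or> a$i = 1" unfolding a_def by auto
  show "\<exists>i. a$i \<noteq> 0"
    using Aeven_orbit_not_all_even[OF assms(2,3)] unfolding a_def by (auto simp: odd_iff_mod_2_eq_one)
  define p where "p = (\<chi> i. (M *v r)$i div 2)"
  have "M *v r = a + 2 *s p" unfolding a_def p_def by (rule vec_mod2_decomp)
  then have "Qf (a + 2 *s p) = 0" using Qf_Aeven_invariant[OF assms(3)] assms(1) by metis
  then have "Qf a = 4 * (- Qf_polar a p - Qf p)" by (simp add: Qf_add_scaled algebra_simps)
  then show "4 dvd Qf a" by simp
qed

lemma mat_one_plus_scaled_mult:
  fixes A B :: "'a::comm_ring_1^'n^'n"
  shows "(\<chi> i j. (if i = j then 1 else 0) + c * A$i$j) ** (\<chi> i j. (if i = j then 1 else 0) + c * B$i$j)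
    = (\<chi> i j. (if i = j then 1 else 0) + c * (A$i$j + B$i$j + c * (A ** B)$i$j))"
proof -
  have "(\<Sum>l\<in>UNIV. ((if i = l then 1 else 0) + c * A$i$l) * ((if l = j then 1 else 0) + c * B$l$j))
     = (if i = j then 1 else 0) + c * (A$i$j + B$i$j + c * (\<Sum>l\<in>UNIV. A$i$l * B$l$j))" for i j
  proof -
    have "((if i = l then 1 else 0) + c * A$i$l) * ((if l = j then 1 else 0) + c * B$l$j)
       = (if i = l then (if l = j then 1 else 0) else 0) + (if i = l then c * B$l$j else 0)
         + (if l = j then c * A$i$l else 0) + c * c * (A$i$l * B$l$j)" for l
      by (simp add: algebra_simps)
    then show ?thesis by (simp only:) (simp add: sum.distrib sum_distrib_left algebra_simps)
  qed
  then show ?thesis by (simp add: matrix_matrix_mult_def vec_eq_iff)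
qed

definition near_id :: "nat \<Rightarrow> int^'n^'n \<Rightarrow> int^'n^'n" where
  "near_id k Y = (\<chi> i j. (if i = j then 1 else 0) + 2^k * Y$i$j)"

lemma near_id_mult:
  "near_id k A ** near_id k B = near_id k (\<chi> i j. A$i$j + B$i$j + 2^k * (A ** B)$i$j)"
  unfolding near_id_def mat_one_plus_scaled_mult by simp

lemma near_id_mult_vec: "(near_id k Y *v x)$i = x$i + 2^k * (Y *v x)$i"
proof -
  have "((if i = j then 1 else 0) + 2^k * Y$i$j) * x$j = (if i = j then x$j else 0) + 2^k * (Y$i$j * x$j)"
    for j by (simp add: algebra_simps)
  then show ?thesis unfolding near_id_def matrix_vector_mult_def
    by (simp add: sum.distrib sum_distrib_left)
qed

lemma matrix_vector_mult_mod_cong: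
  fixes A B :: "int^'n^'m"
  assumes "\<forall>i j. A$i$j mod d = B$i$j mod d" "\<forall>j. x$j mod d = y$j mod d"
  shows "(A *v x)$i mod d = (B *v y)$i mod d"
proof -
  have cong: "(A$i$j * x$j) mod d = (B$i$j * y$j) mod d" for j
    by (intro mod_mult_cong) (use assms in auto)
  have "(\<Sum>j\<in>UNIV. A$i$j * x$j) mod d = (\<Sum>j\<in>UNIV. (A$i$j * x$j) mod d) mod d"
    by (simp add: mod_sum_eq)
  also have "\<dots> = (\<Sum>j\<in>UNIV. B$i$j * y$j) mod d"
    by (simp add: cong mod_sum_eq)
  finally show ?thesis by (simp add: matrix_vector_mult_def)
qed

text \<open>The image in \<open>M\<^sub>4(\<int>/2)\<close> of \<open>{N \<in> \<A>. N \<equiv> I (mod 2\<^sup>k)}\<close> under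
  \<open>I + 2\<^sup>k Y \<mapsto> Y mod 2\<close>, represented by integer lifts.\<close>
definition level_residues :: "nat \<Rightarrow> (int^4^4) set" where
  "level_residues k = {Y. \<exists>Y'. near_id k Y' \<in> Aeven \<and> (\<forall>i j. Y'$i$j mod 2 = Y$i$j mod 2)}"

lemma level_residues_mod2_cong:
  assumes "Y \<in> level_residues k" "\<forall>i j. Y$i$j mod 2 = Z$i$j mod 2"
  shows "Z \<in> level_residues k"
proof -
  obtain Y' where "near_id k Y' \<in> Aeven" "\<forall>i j. Y'$i$j mod 2 = Y$i$j mod 2"
    using assms(1) unfolding level_residues_def by blast
  then show ?thesis
    using assms(2) unfolding level_residues_def by (intro CollectI exI[of _ Y']) simp
qed

lemma zero_in_level_residues: "0 \<in> level_residues k"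
proof -
  have "near_id k (0::int^4^4) = mat 1" by (simp add: near_id_def mat_def vec_eq_iff)
  then have "near_id k (0::int^4^4) \<in> Aeven" using Aeven.one by simp
  then show ?thesis unfolding level_residues_def by blast
qed

lemma level_residues_add:
  assumes "k \<ge> 1" "A \<in> level_residues k" "B \<in> level_residues k"
  shows "A + B \<in> level_residues k"
proof -
  obtain A' B' where A': "near_id k A' \<in> Aeven" "\<forall>i j. A'$i$j mod 2 = A$i$j mod 2"
    and B': "near_id k B' \<in> Aeven" "\<forall>i j. B'$i$j mod 2 = B$i$j mod 2"
    using assms unfolding level_residues_def by blast
  define C where "C = (\<chi> i j. A'$i$j + B'$i$j + 2^k * (A' ** B')$i$j)"
  have "near_id k C \<in> Aeven"
    using Aeven_mult[OF A'(1) B'(1)] unfolding C_def near_id_mult .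
  moreover have "C$i$j mod 2 = (A + B)$i$j mod 2" for i j
  proof -
    obtain k' where "k = Suc k'" using assms(1) by (cases k) auto
    then have "C$i$j = (A'$i$j + B'$i$j) + 2 * (2^k' * (A' ** B')$i$j)" unfolding C_def by simp
    then have "C$i$j mod 2 = (A'$i$j + B'$i$j) mod 2" by simp
    also have "\<dots> = (A$i$j + B$i$j) mod 2"
      using A'(2) B'(2) by (intro mod_add_cong) auto
    finally show ?thesis by simp
  qed
  ultimately show ?thesis unfolding level_residues_def by blast
qed

lemma level_residues_scale:
  assumes "Y \<in> level_residues k"
  shows "(\<chi> i j. c * Y$i$j) \<in> level_residues k"
proof (cases "even c")
  case True
  then have "\<forall>i j. (0::int^4^4)$i$j mod 2 = (\<chi> i j. c * Y$i$j)$i$j mod 2" by simp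
  then show ?thesis using zero_in_level_residues level_residues_mod2_cong by blast
next
  case False
  then have "c mod 2 = 1" by presburger
  then have "(c * Y$i$j) mod 2 = Y$i$j mod 2" for i j
    using mod_mult_eq[of c 2 "Y$i$j"] by simp
  then show ?thesis by (intro level_residues_mod2_cong[OF assms]) simp
qed

text \<open>Squaring: \<open>(I + 2\<^sup>k A)\<^sup>2 = I + 2\<^sup>k\<^sup>+\<^sup>1 (A + 2\<^sup>k\<^sup>-\<^sup>1 A\<^sup>2)\<close>, and \<open>2\<^sup>k\<^sup>-\<^sup>1\<close> is even for \<open>k \<ge> 2\<close>.\<close>
lemma level_residues_Suc:
  assumes "k \<ge> 2" "Y \<in> level_residues k"
  shows "Y \<in> level_residues (Suc k)"
proof -
  obtain A where A: "near_id k A \<in> Aeven" "\<forall>i j. A$i$j mod 2 = Y$i$j mod 2"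
    using assms unfolding level_residues_def by blast
  obtain k' where k': "k = Suc (Suc k')" using assms(1) by (metis add_2_eq_Suc le_Suc_ex)
  define A2 where "A2 = (\<chi> i j. A$i$j + 2 * (2^k' * (A ** A)$i$j))"
  have scaled: "(2::int)^k * (A$i$j + A$i$j + 2^k * (A ** A)$i$j) = 2^Suc k * A2$i$j" for i j
    unfolding A2_def k' by (simp add: algebra_simps)
  have "near_id k A ** near_id k A = near_id (Suc k) A2"
    unfolding near_id_mult by (simp only: near_id_def vec_lambda_beta scaled)
  moreover have "\<forall>i j. A2$i$j mod 2 = Y$i$j mod 2" using A(2) unfolding A2_def by simp
  ultimately show ?thesis
    unfolding level_residues_def using Aeven_mult[OF A(1) A(1)] by (intro CollectI exI[of _ A2]) simp
qed

lemma level_residues_mono: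
  assumes "2 \<le> j" "j \<le> k" "Y \<in> level_residues j"
  shows "Y \<in> level_residues k"
  using assms(2)
proof (induction k rule: dec_induct)
  case base then show ?case using assms(3) .
next
  case (step n) then show ?case using assms(1) level_residues_Suc by simp
qed

lemma level_residues_of_word:
  assumes "S\<^sub>1 \<in> gens" "S\<^sub>2 \<in> gens" "S\<^sub>3 \<in> gens" "S\<^sub>4 \<in> gens"
    and "S\<^sub>1 ** S\<^sub>2 ** (S\<^sub>3 ** S\<^sub>4 ** mat 1) = near_id k Y"
  shows "Y \<in> level_residues k"
proof -
  have "S\<^sub>1 ** S\<^sub>2 ** (S\<^sub>3 ** S\<^sub>4 ** mat 1) \<in> Aeven"
    using assms(1-4) by (intro Aeven.step Aeven.one)
  then show ?thesis unfolding level_residues_def using assms(5) by auto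
qed

text \<open>Each \<open>Y\<^sub>i\<close> is \<open>(W - I)/8\<close> for the product \<open>W\<close> of four generators given in
  the proof of \<open>level3_witnesses\<close>.\<close>
definition Y1 :: "int^4^4" where "Y1 = mat4 [[4,-7,8,11],[1,-2,2,3],[0,0,0,0],[8,-14,16,22]]"
definition Y2 :: "int^4^4" where "Y2 = mat4 [[4,8,-7,11],[0,0,0,0],[1,2,-2,3],[8,16,-14,22]]"
definition Y3 :: "int^4^4" where "Y3 = mat4 [[-1,3,3,1],[0,0,0,0],[0,0,0,0],[-1,4,4,1]]"
definition Y4 :: "int^4^4" where "Y4 = mat4 [[-5,-10,11,26],[-1,-2,2,5],[0,0,0,0],[-9,-18,20,47]]"
definition Y5 :: "int^4^4" where "Y5 = mat4 [[0,0,0,0],[8,4,-7,11],[2,1,-2,3],[16,8,-14,22]]"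
definition Y6 :: "int^4^4" where "Y6 = mat4 [[0,0,0,0],[3,-1,3,1],[0,0,0,0],[4,-1,4,1]]"

lemma level3_witnesses:
  "Y1 \<in> level_residues 3" "Y2 \<in> level_residues 3" "Y3 \<in> level_residues 3"
  "Y4 \<in> level_residues 3" "Y5 \<in> level_residues 3" "Y6 \<in> level_residues 3"
proof -
  note mat_simps = gens_def gens_defs Y1_def Y2_def Y3_def Y4_def Y5_def Y6_def near_id_def
    mat4_def matrix_matrix_mult_def sum_4 vec_eq_iff forall_4 mat_def
  show "Y1 \<in> level_residues 3"
    by (rule level_residues_of_word[of S_123 S_1'23 S_1'2'3 S_12'3]) (simp_all add: mat_simps)
  show "Y2 \<in> level_residues 3"
    by (rule level_residues_of_word[of S_123 S_1'23 S_1'23' S_123']) (simp_all add: mat_simps)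
  show "Y3 \<in> level_residues 3"
    by (rule level_residues_of_word[of S_123 S_1'23 S_123 S_1'23]) (simp_all add: mat_simps)
  show "Y4 \<in> level_residues 3"
    by (rule level_residues_of_word[of S_123 S_1'23 S_12'3 S_1'2'3]) (simp_all add: mat_simps)
  show "Y5 \<in> level_residues 3"
    by (rule level_residues_of_word[of S_123 S_12'3 S_12'3' S_123']) (simp_all add: mat_simps)
  show "Y6 \<in> level_residues 3"
    by (rule level_residues_of_word[of S_123 S_12'3 S_123 S_12'3]) (simp_all add: mat_simps)
qed

lemma level_residues_solve:
  assumes "m \<ge> 3"
    and a: "(a$1, a$2, a$3, a$4) \<in> {(1,0,0,1), (0,1,0,1), (0,0,1,1)}"
    and "even (Qf_polar a t)"
  shows "\<exists>Y \<in> level_residues m. \<forall>i. (Y *v a)$i mod 2 = t$i mod 2"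
proof -
  define comb :: "int \<Rightarrow> int^4^4 \<Rightarrow> int \<Rightarrow> int^4^4 \<Rightarrow> int \<Rightarrow> int^4^4 \<Rightarrow> int^4^4"
    where "comb c\<^sub>1 A c\<^sub>2 B c\<^sub>3 C = (\<chi> i j. c\<^sub>1 * A$i$j) + (\<chi> i j. c\<^sub>2 * B$i$j) + (\<chi> i j. c\<^sub>3 * C$i$j)"
    for c\<^sub>1 A c\<^sub>2 B c\<^sub>3 C
  have comb_mem: "comb c\<^sub>1 A c\<^sub>2 B c\<^sub>3 C \<in> level_residues m"
    if "A \<in> level_residues 3" "B \<in> level_residues 3" "C \<in> level_residues 3" for c\<^sub>1 A c\<^sub>2 B c\<^sub>3 C
  proof -
    have lift: "X \<in> level_residues m" if "X \<in> level_residues 3" for X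
      using level_residues_mono[of 3 m X] that assms(1) by simp
    show ?thesis unfolding comb_def using that assms(1)
      by (intro level_residues_add level_residues_scale) (auto intro: lift)
  qed
  note comb_simps = comb_def matrix_vector_mult_def sum_4 forall_4 Qf_polar_def
    Y1_def Y2_def Y3_def Y4_def Y5_def Y6_def mat4_def
  from a consider
      "a$1 = 1" "a$2 = 0" "a$3 = 0" "a$4 = 1"
    | "a$1 = 0" "a$2 = 1" "a$3 = 0" "a$4 = 1"
    | "a$1 = 0" "a$2 = 0" "a$3 = 1" "a$4 = 1"
    by auto
  then show ?thesis
  proof cases
    case 1
    have "\<forall>i. (comb (t$1) Y4 (t$2) Y5 (t$4) Y6 *v a)$i mod 2 = t$i mod 2"
      using 1 assms(3) by (simp add: comb_simps) (intro conjI; presburger)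
    then show ?thesis using comb_mem level3_witnesses by blast
  next
    case 2
    have "\<forall>i. (comb (t$1) Y2 (t$2) Y1 (t$4) Y3 *v a)$i mod 2 = t$i mod 2"
      using 2 assms(3) by (simp add: comb_simps) (intro conjI; presburger)
    then show ?thesis using comb_mem level3_witnesses by blast
  next
    case 3
    have "\<forall>i. (comb (t$1) Y1 (t$3) Y2 (t$4) Y3 *v a)$i mod 2 = t$i mod 2"
      using 3 assms(3) by (simp add: comb_simps) (intro conjI; presburger)
    then show ?thesis using comb_mem level3_witnesses by blast
  qed
qed

lemma red_red: "d dvd e \<Longrightarrow> red d (red e w) = red d w"
  by (simp add: red_def mod_mod_cancel)

lemma red_orbit_in_Vmod: "M \<in> Aeven \<Longrightarrow> red d (M *v r) \<in> Vmod r d"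
  unfolding Vmod_def orbitV_def by blast

lemma red_eq_imp_add_scaled: "red d w = red d x \<Longrightarrow> \<exists>t. w = x + d *s t"
proof
  assume "red d w = red d x"
  then have "d dvd w$i - x$i" for i by (simp add: red_def vec_eq_iff mod_eq_dvd_iff)
  then show "w = x + d *s (\<chi> i. (w$i - x$i) div d)" by (simp add: vec_eq_iff)
qed

lemma add_pow2_mult_mod_cong:
  fixes a b x :: int
  assumes "a mod 2 = b mod 2"
  shows "(x + 2^m * a) mod 2^(m+1) = (x + 2^m * b) mod 2^(m+1)"
proof -
  obtain k where "a = b + 2 * k"
    using assms by (metis mod_eq_dvd_iff dvd_def add_diff_cancel_left' diff_add_cancel)
  then have "x + 2^m * a = (x + 2^m * b) + k * 2^(m+1)" by (simp add: algebra_simps)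
  then show ?thesis by (simp only: mod_mult_self1)
qed

lemma even_Qf_polar_of_lift:
  assumes "Qf x = 0" "m \<ge> 2" "2^(m+2) dvd Qf (x + 2^m *s t)"
  shows "even (Qf_polar x t)"
proof -
  have "(2::int)^(m+2) dvd 2^(2*m)" using assms(2) by (intro le_imp_power_dvd) simp
  then have "(2::int)^(m+2) dvd (2^m)^2 * Qf t" by (simp add: power_mult[symmetric] mult.commute)
  moreover have "Qf (x + 2^m *s t) = 2^(m+1) * Qf_polar x t + (2^m)^2 * Qf t"
    using assms(1) by (simp add: Qf_add_scaled)
  ultimately have "2^(m+1) * 2 dvd 2^(m+1) * Qf_polar x t"
    using assms(3) by (simp add: dvd_add_left_iff)
  then show ?thesis by (subst (asm) dvd_mult_cancel_left) simp
qed

lemma Vmod_lift: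
  assumes "M \<in> Aeven" "Y \<in> level_residues m" "\<forall>i. (Y *v (M *v r))$i mod 2 = t$i mod 2"
  shows "red (2^(m+1)) (M *v r + 2^m *s t) \<in> Vmod r (2^(m+1))"
proof -
  obtain Y' where Y': "near_id m Y' \<in> Aeven" "\<forall>i j. Y'$i$j mod 2 = Y$i$j mod 2"
    using assms(2) unfolding level_residues_def by blast
  define N where "N = near_id m Y' ** M"
  have "(N *v r)$i mod 2^(m+1) = (M *v r + 2^m *s t)$i mod 2^(m+1)" for i
  proof -
    have "(Y' *v (M *v r))$i mod 2 = t$i mod 2"
      using matrix_vector_mult_mod_cong[OF Y'(2), of "M *v r" "M *v r"] assms(3) by simp
    then have "((M *v r)$i + 2^m * (Y' *v (M *v r))$i) mod 2^(m+1) = ((M *v r)$i + 2^m * t$i) mod 2^(m+1)"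
      by (rule add_pow2_mult_mod_cong)
    then show ?thesis
      unfolding N_def by (simp add: matrix_vector_mul_assoc[symmetric] near_id_mult_vec)
  qed
  then have "red (2^(m+1)) (N *v r) = red (2^(m+1)) (M *v r + 2^m *s t)"
    unfolding red_def by (simp add: vec_eq_iff)
  moreover have "N \<in> Aeven" unfolding N_def using Aeven_mult Y'(1) assms(1) .
  ultimately show ?thesis using red_orbit_in_Vmod by metis
qed

lemma Vmod_lift_of_even_polar:
  assumes "Qf r = 0" "Gcd (packing_curvatures r) = 1" "m \<ge> 3" "M \<in> Aeven"
    and "even (Qf_polar (M *v r) t)"
  shows "red (2^(m+1)) (M *v r + 2^m *s t) \<in> Vmod r (2^(m+1))"
proof -
  define a where "a = (\<chi> i. (M *v r)$i mod 2)"
  have "Qf_polar (M *v r) t = Qf_polar a t + 2 * Qf_polar (\<chi> i. (M *v r)$i div 2) t"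
    unfolding a_def by (subst vec_mod2_decomp) (simp add: Qf_polar_add_left Qf_polar_scale_left)
  then have "even (Qf_polar a t)" using assms(5) by simp
  then obtain Y where Y: "Y \<in> level_residues m" "\<forall>i. (Y *v a)$i mod 2 = t$i mod 2"
    using level_residues_solve[OF assms(3) Aeven_orbit_mod2[OF assms(1,2,4)]] a_def by blast
  have "(Y *v (M *v r))$i mod 2 = (Y *v a)$i mod 2" for i
    by (rule matrix_vector_mult_mod_cong) (simp_all add: a_def)
  then show ?thesis using Vmod_lift[OF assms(4) Y(1)] Y(2) by simp
qed

lemma Vmod_lift_of_Qf_dvd:
  assumes "Qf r = 0" "Gcd (packing_curvatures r) = 1" "m \<ge> 3"
    and "2^(m+2) dvd Qf w" "red (2^m) w \<in> Vmod r (2^m)"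
  shows "red (2^(m+1)) w \<in> Vmod r (2^(m+1))"
proof -
  obtain M where M: "M \<in> Aeven" "red (2^m) w = red (2^m) (M *v r)"
    using assms(5) unfolding Vmod_def orbitV_def by auto
  then obtain t where t: "w = M *v r + 2^m *s t" using red_eq_imp_add_scaled by blast
  have "even (Qf_polar (M *v r) t)"
    using even_Qf_polar_of_lift[of "M *v r" m t] Qf_Aeven_invariant[OF M(1)] assms(1,3,4) t by simp
  then show ?thesis using Vmod_lift_of_even_polar[OF assms(1-3) M(1)] t by simp
qed

lemma Vmod_subset_C2:
  assumes "Qf r = 0"
  shows "Vmod r (2^m) \<subseteq> C2 m"
proof
  fix v assume "v \<in> Vmod r (2^m)"
  then obtain M where M: "M \<in> Aeven" and v: "v = red (2^m) (M *v r)"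
    unfolding Vmod_def orbitV_def by auto
  have "v \<in> residues4 (2^m)" unfolding v residues4_def red_def by simp
  moreover have "red (2^m) (M *v r) = v \<and> 2^(m+1) dvd Qf (M *v r)"
    using v Qf_Aeven_invariant[OF M] assms by simp
  ultimately show "v \<in> C2 m" unfolding C2_def by blast
qed

theorem lemma2p9:
  fixes r :: "int^4" and m :: nat
  assumes descartes: "Qf r = 0"
    and primitive: "Gcd (packing_curvatures r) = 1"
    and m3: "m \<ge> 3"
  shows "{v \<in> C2 (m+1). red (2^m) v \<in> Vmod r (2^m)} = Vmod r (2^(m+1))"
proof (intro equalityI subsetI)
  fix v assume "v \<in> {v \<in> C2 (m+1). red (2^m) v \<in> Vmod r (2^m)}"
  then obtain w where v: "v = red (2^(m+1)) w" and w: "2^(m+1+1) dvd Qf w"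
    and "red (2^m) v \<in> Vmod r (2^m)"
    unfolding C2_def by auto
  then have "red (2^m) w \<in> Vmod r (2^m)" using red_red[of "2^m" "2^(m+1)" w] by simp
  moreover have "2^(m+2) dvd Qf w" using w by (metis add.assoc one_add_one)
  ultimately show "v \<in> Vmod r (2^(m+1))" using Vmod_lift_of_Qf_dvd[OF descartes primitive m3] v by blast
next
  fix v assume v: "v \<in> Vmod r (2^(m+1))"
  then obtain M where M: "M \<in> Aeven" and "v = red (2^(m+1)) (M *v r)"
    unfolding Vmod_def orbitV_def by auto
  then have "red (2^m) v \<in> Vmod r (2^m)"
    using red_orbit_in_Vmod[OF M] red_red[of "2^m" "2^(m+1)"] by simp
  then show "v \<in> {v \<in> C2 (m+1). red (2^m) v \<in> Vmod r (2^m)}"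
    using v Vmod_subset_C2[OF descartes] by blast
qed

end
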